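(* Let $T$ be a triangle and let $\Gamma_{h,T}$ be an open line segment with endpoints on $\partial T$ that divides $T$ into two nonempty open parts $T_h^+$ and $T_h^-$; let $\mathbf{n}_h$ be the unit normal of $\Gamma_{h,T}$ pointing into $T_h^+$ and $\mathbf{t}_h=R_{-\pi/2}\mathbf{n}_h$. For $k=1,2$ consider pairs $(\mathbf{v}^{J_k},q^{J_k})$, piecewise defined by $\mathbf{v}^{J_k}=\mathbf{v}^{J_k,\pm}$, $q^{J_k}=q^{J_k,\pm}$ on $T_h^\pm$, with $\mathbf{v}^{J_k,\pm}\in P_1(T)^2$, $q^{J_k,\pm}\in P_0(T)$, such that $N_{i,T}(\mathbf{v}^{J_k},q^{J_k})=0$ for $i=1,\dots,7$, $[\![\mathbf{v}^{J_k,\pm}]\!]=\mathbf{0}$ on $\Gamma_{h,T}$, $[\![\nabla\cdot\mathbf{v}^{J_k,\pm}]\!]=0$, and $$[\![\sigma(1,\mathbf{v}^{J_1,\pm},q^{J_1,\pm})\mathbf{n}_h]\!]=\mathbf{n}_h,\qquad [\![\sigma(1,\mathbf{v}^{J_2,\pm},q^{J_2,\pm})\mathbf{n}_h]\!]=\mathbf{t}_h.$$ Then such pairs exist, are unique, and are given by $$\mathbf{v}^{J_1}=\mathbf{0},\quad q^{J_1}=z-\pi^0_{h,T}z,\qquad \mathbf{v}^{J_2}=(w-\pi^{CR}_{h,T}w)\mathbf{t}_h,\quad q^{J_2}=0,$$ where $z=-1$ on $T_h^+$, $z=0$ on $T_h^-$, and $w(\mathbf{x})=\operatorname{dist}(\mathbf{x},\Gamma_{h,T})$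 on $T_h^+$, $w=0$ on $T_h^-$.
   Context: $R_{-\pi/2}$ denotes rotation by $90^\circ$ clockwise. $\sigma(\mu,\mathbf{v},q)=2\mu\boldsymbol{\epsilon}(\mathbf{v})-q\mathbb{I}$ with $\boldsymbol{\epsilon}(\mathbf{v})=\frac12(\nabla\mathbf{v}+(\nabla\mathbf{v})^T)$. For polynomials $g^\pm$ (viewed as defined on all of $T$), $[\![g^\pm]\!]=g^+-g^-$. With edges $e_1,e_2,e_3$ of $T$ and $\mathbf{v}=(v_1,v_2)^T$, the degrees of freedom are $N_{i,T}(\mathbf{v},q)=|e_i|^{-1}\int_{e_i}v_1$, $N_{3+i,T}(\mathbf{v},q)=|e_i|^{-1}\int_{e_i}v_2$ ($i=1,2,3$), $N_{7,T}(\mathbf{v},q)=|T|^{-1}\int_T q$. For a function $v$ with well-defined edge integrals, $\pi^{CR}_{h,T}v$ is the unique element of $P_1(T)$ with $\int_{e_i}\pi^{CR}_{h,T}v=\int_{e_i}v$, $i=1,2,3$; $\pi^0_{h,T}q=|T|^{-1}\int_Tq$. *)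

theory Defs
  imports "HOL-Analysis.Analysis"
begin

type_synonym pt = "real^2"

text \<open>Scalar P1 polynomial (c, g): x \<mapsto> c + g . x ;
  vector P1 polynomial (c, M): x \<mapsto> c + M x, so that grad v = M (constant).\<close>
type_synonym p1s = "real \<times> (real^2)"
type_synonym p1v = "(real^2) \<times> (real^2^2)"

definition ev1 :: "p1s \<Rightarrow> pt \<Rightarrow> real" where
  "ev1 P x = fst P + snd P \<bullet> x"

definition ev2 :: "p1v \<Rightarrow> pt \<Rightarrow> real^2" where
  "ev2 V x = fst V + snd V *v x"

definition divg :: "real^2^2 \<Rightarrow> real" where
  "divg G = G$1$1 + G$2$2"

definition epsg :: "real^2^2 \<Rightarrow> real^2^2" where
  "epsg G = (1/2) *\<^sub>R (G + transpose G)"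

text \<open>sigma(mu, v, q) for v with gradient G and scalar pressure value q\<close>
definition sigmag :: "real \<Rightarrow> real^2^2 \<Rightarrow> real \<Rightarrow> real^2^2" where
  "sigmag mu G q = (2 * mu) *\<^sub>R epsg G - q *\<^sub>R mat 1"

definition rot_m90 :: "real^2 \<Rightarrow> real^2" where
  "rot_m90 n = vector [n$2, - (n$1)]"

definition tri :: "pt \<Rightarrow> pt \<Rightarrow> pt \<Rightarrow> pt set" where
  "tri a b c = interior (convex hull {a, b, c})"

definition tplus :: "pt \<Rightarrow> pt \<Rightarrow> pt \<Rightarrow> pt \<Rightarrow> pt \<Rightarrow> pt set" where
  "tplus a b c p n = {x \<in> tri a b c. n \<bullet> (x - p) > 0}"

definition tminus :: "pt \<Rightarrow> pt \<Rightarrow> pt \<Rightarrow> pt \<Rightarrow> pt \<Rightarrow> pt set" where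
  "tminus a b c p n = {x \<in> tri a b c. n \<bullet> (x - p) < 0}"

definition pw :: "pt \<Rightarrow> pt \<Rightarrow> 'a \<Rightarrow> 'a \<Rightarrow> pt \<Rightarrow> 'a" where
  "pw p n fp fm x = (if n \<bullet> (x - p) > 0 then fp else fm)"

text \<open>|e|^{-1} \<integral>_e f for the edge e = [a,b]\<close>
definition edge_avg :: "(pt \<Rightarrow> real) \<Rightarrow> pt \<Rightarrow> pt \<Rightarrow> real" where
  "edge_avg f a b = integral {0..1} (\<lambda>t. f (a + t *\<^sub>R (b - a)))"

definition cell_avg :: "pt set \<Rightarrow> (pt \<Rightarrow> real) \<Rightarrow> real" where
  "cell_avg T f = integral T f / measure lebesgue T"

definition piCR :: "pt \<Rightarrow> pt \<Rightarrow> pt \<Rightarrow> (pt \<Rightarrow> real) \<Rightarrow> p1s" where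
  "piCR a b c w = (THE P. edge_avg (ev1 P) b c = edge_avg w b c
                       \<and> edge_avg (ev1 P) c a = edge_avg w c a
                       \<and> edge_avg (ev1 P) a b = edge_avg w a b)"

text \<open>Degrees of freedom N_1..N_7 all vanish on the (piecewise) pair (v, q)\<close>
definition dofs_zero :: "pt \<Rightarrow> pt \<Rightarrow> pt \<Rightarrow> (pt \<Rightarrow> real^2) \<Rightarrow> (pt \<Rightarrow> real) \<Rightarrow> bool" where
  "dofs_zero a b c v q \<longleftrightarrow>
     (\<forall>(e1, e2) \<in> {(b, c), (c, a), (a, b)}.
        edge_avg (\<lambda>x. v x $ 1) e1 e2 = 0 \<and> edge_avg (\<lambda>x. v x $ 2) e1 e2 = 0)
     \<and> cell_avg (tri a b c) q = 0"

text \<open>The defining conditions of (v^{J}, q^{J}) with stress jump g; S = (v^+, v^-, q^+, q^-)\<close>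
definition jump_cond :: "pt \<Rightarrow> pt \<Rightarrow> pt \<Rightarrow> pt \<Rightarrow> pt \<Rightarrow> pt \<Rightarrow> real^2
      \<Rightarrow> p1v \<times> p1v \<times> real \<times> real \<Rightarrow> bool" where
  "jump_cond a b c p q n g S \<longleftrightarrow>
     (case S of (Vp, Vm, qp, qm) \<Rightarrow>
        dofs_zero a b c (\<lambda>x. pw p n (ev2 Vp x) (ev2 Vm x) x) (\<lambda>x. pw p n qp qm x)
      \<and> (\<forall>x \<in> open_segment p q. ev2 Vp x - ev2 Vm x = 0)
      \<and> divg (snd Vp) - divg (snd Vm) = 0
      \<and> sigmag 1 (snd Vp) qp *v n - sigmag 1 (snd Vm) qm *v n = g)"

end

theory Submission
  imports Defs
begin

(* The jump conditions only involve the differences of the two polynomial pieces. A P1 vector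
   field vanishing on the interface line has the form (n . (x - p)) d, so its divergence is d . n
   and its normal stress is d + (d . n) n; hence the jumps force d = g - (g . n) n and a pressure
   jump -(g . n). The pair is therefore v = v^- + max 0 (n . (x - p)) d, q = q^- + (g . n) z, and
   the degrees of freedom pin down v^- and q^-: the edge averages of a P1 function are its values
   at the edge midpoints, which form a nondegenerate triangle, so v^- = -(pi^CR w) d, and the cell
   average fixes q^-. For g = n this gives d = 0, for g = t it gives d = t and no pressure jump. *)

lemma inner_vec2: "(u::real^2) \<bullet> v = u$1 * v$1 + u$2 * v$2"
  by (simp add: inner_vec_def sum_2)

definition cross2 :: "real^2 \<Rightarrow> real^2 \<Rightarrow> real" where
  "cross2 u v = u$1 * v$2 - u$2 * v$1"

lemma inner_rot_m90: "rot_m90 u \<bullet> v = cross2 v u"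
  by (simp add: rot_m90_def cross2_def inner_vec2 algebra_simps)

lemma cross2_degenerate [simp]:
  "cross2 0 v = 0" "cross2 u 0 = 0" "cross2 u u = 0" "cross2 u (k *\<^sub>R u) = 0"
  by (simp_all add: cross2_def)

lemma cross2_antisym: "cross2 u v = - cross2 v u"
  by (simp add: cross2_def)

lemma cross2_scaleR_eq: "cross2 x y *\<^sub>R g = (g \<bullet> x) *\<^sub>R rot_m90 y - (g \<bullet> y) *\<^sub>R rot_m90 x"
  by (simp add: vec_eq_iff forall_2 cross2_def rot_m90_def inner_vec2 algebra_simps)

lemma unit_frame_expansion:
  assumes "norm n = 1"
  shows "x = (n \<bullet> x) *\<^sub>R n + (rot_m90 n \<bullet> x) *\<^sub>R rot_m90 n"
proof -
  have "n$1 * n$1 + n$2 * n$2 = 1"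
    using assms by (metis inner_vec2 norm_eq_1)
  then show ?thesis
    by (simp add: vec_eq_iff forall_2 rot_m90_def inner_vec2) algebra
qed

lemma parallel_if_cross2_eq_0:
  assumes "cross2 u v = 0" "u \<noteq> 0"
  shows "v = ((u \<bullet> v) / (u \<bullet> u)) *\<^sub>R u"
proof -
  have "(u \<bullet> u) *\<^sub>R v = (u \<bullet> v) *\<^sub>R u"
    using assms(1) unfolding cross2_def by (simp add: vec_eq_iff forall_2 inner_vec2) algebra
  moreover have "u \<bullet> u \<noteq> 0"
    using assms(2) by simp
  ultimately show ?thesis
    by (metis divide_inverse_commute scaleR_scaleR inverse_eq_divide
        left_inverse scaleR_one)
qed

lemma orthogonal_unit_2D:
  assumes "norm n = 1" "n \<bullet> u = 0"
  shows "u = (rot_m90 n \<bullet> u) *\<^sub>R rot_m90 n"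
proof -
  have "n$1 * n$1 + n$2 * n$2 = 1" "n$1 * u$1 + n$2 * u$2 = 0"
    using assms by (metis inner_vec2 norm_eq_1)+
  then show ?thesis
    by (simp add: vec_eq_iff forall_2 rot_m90_def inner_vec2) algebra
qed

lemma collinear_iff_cross2: "collinear {a, b, c} \<longleftrightarrow> cross2 (b - a) (c - a) = 0"
proof -
  have "collinear {a, b, c} \<longleftrightarrow> collinear {0, b - a, c - a}"
    using collinear_3[of b a c] by (simp add: insert_commute)
  also have "\<dots> \<longleftrightarrow> cross2 (b - a) (c - a) = 0"
    unfolding collinear_lemma by (auto dest: parallel_if_cross2_eq_0)
  finally show ?thesis .
qed

lemma not_collinear_midpoints:
  fixes a b c :: "real^2"
  assumes "\<not> collinear {a, b, c}"
  shows "\<not> collinear {midpoint b c, midpoint c a, midpoint a b}"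
  using assms unfolding collinear_iff_cross2
  by (simp add: cross2_def midpoint_def algebra_simps)

lemma ev1_add [simp]: "ev1 (P + Q) x = ev1 P x + ev1 Q x"
  and ev1_diff [simp]: "ev1 (P - Q) x = ev1 P x - ev1 Q x"
  and ev1_uminus [simp]: "ev1 (- P) x = - ev1 P x"
  and ev1_scaleR [simp]: "ev1 (c *\<^sub>R P) x = c * ev1 P x"
  by (simp_all add: ev1_def inner_add_left inner_diff_left algebra_simps)

lemma p1_eq_if_eq_at_noncollinear:
  fixes u v w :: "real^2"
  assumes "\<not> collinear {u, v, w}"
    and "ev1 P u = ev1 Q u" "ev1 P v = ev1 Q v" "ev1 P w = ev1 Q w"
  shows "P = Q"
proof -
  define g where "g = snd P - snd Q"
  have "g \<bullet> (v - u) = 0" "g \<bullet> (w - u) = 0"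
    using assms(2-4) by (simp_all add: g_def ev1_def inner_diff algebra_simps)
  then have "cross2 (v - u) (w - u) *\<^sub>R g = 0"
    by (simp add: cross2_scaleR_eq)
  then have "snd P = snd Q"
    using assms(1) by (simp add: collinear_iff_cross2 g_def)
  then show "P = Q"
    using assms(2) by (simp add: ev1_def prod_eq_iff)
qed

lemma p1_interpolation_exists:
  fixes u v w :: "real^2"
  assumes "\<not> collinear {u, v, w}"
  shows "\<exists>P. ev1 P u = y1 \<and> ev1 P v = y2 \<and> ev1 P w = y3"
proof -
  define D where "D = cross2 (v - u) (w - u)"
  have "D \<noteq> 0"
    using assms by (simp add: D_def collinear_iff_cross2)
  define g where "g = (1 / D) *\<^sub>R ((y2 - y1) *\<^sub>R rot_m90 (w - u) - (y3 - y1) *\<^sub>R rot_m90 (v - u))"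
  have "g \<bullet> (v - u) = y2 - y1" "g \<bullet> (w - u) = y3 - y1"
    using \<open>D \<noteq> 0\<close>
    by (simp_all add: g_def D_def inner_rot_m90 inner_diff_left cross2_antisym[of "w - u" "v - u"])
  then have "ev1 (y1 - g \<bullet> u, g) u = y1 \<and> ev1 (y1 - g \<bullet> u, g) v = y2 \<and> ev1 (y1 - g \<bullet> u, g) w = y3"
    by (simp add: ev1_def inner_diff_right)
  then show ?thesis ..
qed

lemma continuous_on_ev1: "continuous_on UNIV (ev1 P)"
  unfolding ev1_def by (intro continuous_intros)

lemma integral_01_affine: "integral {0..1} (\<lambda>s::real. \<alpha> + \<beta> * s) = \<alpha> + \<beta> / 2"
proof -
  have "integral {0..1} (\<lambda>s::real. \<alpha> + \<beta> * s)
      = integral {0..1} (\<lambda>s::real. \<alpha>) + integral {0..1} (\<lambda>s. \<beta> * s)"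
    by (rule integral_add) (auto intro: integrable_continuous_real continuous_intros)
  then show ?thesis
    by (simp add: integral_ident)
qed

lemma edge_avg_ev1: "edge_avg (ev1 P) a b = ev1 P (midpoint a b)"
proof -
  have "ev1 P (a + s *\<^sub>R (b - a)) = ev1 P a + (snd P \<bullet> (b - a)) * s" for s
    by (simp add: ev1_def inner_add_right algebra_simps)
  then have "edge_avg (ev1 P) a b = ev1 P a + (snd P \<bullet> (b - a)) / 2"
    by (simp add: edge_avg_def integral_01_affine)
  also have "\<dots> = ev1 P (midpoint a b)"
    by (simp add: ev1_def midpoint_def inner_add_right inner_diff_right field_simps)
  finally show ?thesis .
qed

lemma edge_avg_add_mult:
  assumes "continuous_on UNIV f" "continuous_on UNIV g"
  shows "edge_avg (\<lambda>x. f x + c * g x) a b = edge_avg f a b + c * edge_avg g a b"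
proof -
  have "(\<lambda>s. h (a + s *\<^sub>R (b - a))) integrable_on {0..1}"
    if "continuous_on UNIV h" for h :: "real^2 \<Rightarrow> real"
    by (rule integrable_continuous_real, rule continuous_on_compose2[OF that])
       (auto intro!: continuous_intros)
  from this[OF assms(1)] integrable_on_mult_right[OF this[OF assms(2)]] show ?thesis
    by (simp add: edge_avg_def integral_add)
qed

lemma piCR_iff:
  assumes "\<not> collinear {a, b, c}"
  shows "P = piCR a b c w \<longleftrightarrow>
    ev1 P (midpoint b c) = edge_avg w b c \<and> ev1 P (midpoint c a) = edge_avg w c a
    \<and> ev1 P (midpoint a b) = edge_avg w a b"
proof -
  note midpoints = not_collinear_midpoints[OF assms]
  obtain P0 where P0: "ev1 P0 (midpoint b c) = edge_avg w b c
      \<and> ev1 P0 (midpoint c a) = edge_avg w c a \<and> ev1 P0 (midpoint a b) = edge_avg w a b"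
    using p1_interpolation_exists[OF midpoints] by blast
  have unique: "\<exists>!P. ev1 P (midpoint b c) = edge_avg w b c \<and> ev1 P (midpoint c a) = edge_avg w c a
      \<and> ev1 P (midpoint a b) = edge_avg w a b"
    using P0 p1_eq_if_eq_at_noncollinear[OF midpoints] by (intro ex1I[of _ P0]) auto
  show ?thesis
    unfolding piCR_def edge_avg_ev1 using theI'[OF unique] the1_equality[OF unique] by blast
qed

lemma edge_dofs_zero_iff:
  assumes "\<not> collinear {a, b, c}" "continuous_on UNIV f"
  shows "(\<forall>(e1, e2)\<in>{(b, c), (c, a), (a, b)}. edge_avg (\<lambda>x. ev1 P x + \<gamma> * f x) e1 e2 = 0)
    \<longleftrightarrow> P = - \<gamma> *\<^sub>R piCR a b c f"
proof -
  let ?CR = "piCR a b c f"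
  have avg: "edge_avg (\<lambda>x. ev1 P x + \<gamma> * f x) e1 e2 = ev1 P (midpoint e1 e2) + \<gamma> * edge_avg f e1 e2"
    for e1 e2
    by (simp add: edge_avg_add_mult continuous_on_ev1 assms(2) edge_avg_ev1)
  have "ev1 ?CR (midpoint b c) = edge_avg f b c" "ev1 ?CR (midpoint c a) = edge_avg f c a"
    "ev1 ?CR (midpoint a b) = edge_avg f a b"
    using piCR_iff[OF assms(1), of ?CR f] by simp_all
  then have "(\<forall>(e1, e2)\<in>{(b, c), (c, a), (a, b)}. edge_avg (\<lambda>x. ev1 P x + \<gamma> * f x) e1 e2 = 0)
    \<longleftrightarrow> ev1 P (midpoint b c) = ev1 (- \<gamma> *\<^sub>R ?CR) (midpoint b c)
      \<and> ev1 P (midpoint c a) = ev1 (- \<gamma> *\<^sub>R ?CR) (midpoint c a)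
      \<and> ev1 P (midpoint a b) = ev1 (- \<gamma> *\<^sub>R ?CR) (midpoint a b)"
    by (auto simp: avg)
  also have "\<dots> \<longleftrightarrow> P = - \<gamma> *\<^sub>R ?CR"
    using p1_eq_if_eq_at_noncollinear[OF not_collinear_midpoints[OF assms(1)], of P "- \<gamma> *\<^sub>R ?CR"]
    by auto
  finally show ?thesis .
qed

definition p1v_mult :: "p1s \<Rightarrow> real^2 \<Rightarrow> p1v" where
  "p1v_mult P d = (fst P *\<^sub>R d, \<chi> i j. d$i * snd P $ j)"

definition normal_coord :: "pt \<Rightarrow> real^2 \<Rightarrow> p1s" where
  "normal_coord p n = (- (n \<bullet> p), n)"

lemma ev1_normal_coord [simp]: "ev1 (normal_coord p n) x = n \<bullet> (x - p)"
  and snd_normal_coord [simp]: "snd (normal_coord p n) = n"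
  by (simp_all add: normal_coord_def ev1_def inner_diff_right)

lemma ev2_p1v_mult [simp]: "ev2 (p1v_mult P d) x = ev1 P x *\<^sub>R d"
  by (simp add: p1v_mult_def ev2_def ev1_def vec_eq_iff matrix_vector_mult_def inner_vec_def
      sum_distrib_left algebra_simps)

lemma ev2_add [simp]: "ev2 (V + W) x = ev2 V x + ev2 W x"
  and ev2_diff [simp]: "ev2 (V - W) x = ev2 V x - ev2 W x"
  by (simp_all add: ev2_def matrix_vector_mult_add_rdistrib matrix_vector_mult_diff_rdistrib)

lemma ev2_affine: "ev2 V x = ev2 V y + snd V *v (x - y)"
  by (simp add: ev2_def matrix_vector_mult_diff_distrib)

lemma ev2_eq_iff: "ev2 V = ev2 W \<longleftrightarrow> V = W"
proof
  assume eq: "ev2 V = ev2 W"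
  then have "fst V = fst W"
    by (metis ev2_def add.right_neutral matrix_vector_mult_0_right)
  moreover have "snd V = snd W"
    using eq calculation by (simp add: fun_eq_iff ev2_def matrix_eq)
  ultimately show "V = W"
    by (simp add: prod_eq_iff)
qed simp

lemma ev2_component: "ev2 V x $ k = ev1 (fst V $ k, snd V $ k) x"
  by (simp add: ev2_def ev1_def matrix_vector_mult_def inner_vec_def mult.commute)

lemma p1v_eq_iff_components: "V = W \<longleftrightarrow> (\<forall>k. (fst V $ k, snd V $ k) = (fst W $ k, snd W $ k))"
  by (auto simp: prod_eq_iff vec_eq_iff)

lemma p1v_mult_component: "(fst (p1v_mult P d) $ k, snd (p1v_mult P d) $ k) = d $ k *\<^sub>R P"
  by (simp add: p1v_mult_def prod_eq_iff vec_eq_iff)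

lemma divg_diff: "divg (G - H) = divg G - divg H"
  by (simp add: divg_def)

lemma sigmag_diff: "sigmag \<mu> (G - H) (q - r) = sigmag \<mu> G q - sigmag \<mu> H r"
  by (simp add: sigmag_def epsg_def vec_eq_iff transpose_def mat_def algebra_simps)

lemma divg_p1v_mult: "divg (snd (p1v_mult P d)) = d \<bullet> snd P"
  by (simp add: divg_def p1v_mult_def inner_vec2)

lemma sigmag_p1v_mult:
  "sigmag 1 (snd (p1v_mult P d)) Q *v m = (snd P \<bullet> m) *\<^sub>R d + (d \<bullet> m) *\<^sub>R snd P - Q *\<^sub>R m"
  by (simp add: sigmag_def epsg_def p1v_mult_def vec_eq_iff forall_2 matrix_vector_mult_def sum_2
      transpose_def mat_def inner_vec2 algebra_simps)

lemma p1v_mult_add: "p1v_mult P d + p1v_mult R d = p1v_mult (P + R) d"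
  by (simp flip: ev2_eq_iff add: fun_eq_iff scaleR_add_left)

lemma velocity_dofs_zero_iff:
  assumes "\<not> collinear {a, b, c}" "continuous_on UNIV f"
  shows "(\<forall>(e1, e2)\<in>{(b, c), (c, a), (a, b)}.
        edge_avg (\<lambda>x. (ev2 V x + f x *\<^sub>R d) $ 1) e1 e2 = 0
      \<and> edge_avg (\<lambda>x. (ev2 V x + f x *\<^sub>R d) $ 2) e1 e2 = 0)
    \<longleftrightarrow> V = p1v_mult (- piCR a b c f) d"
proof -
  have component: "(ev2 V x + f x *\<^sub>R d) $ k = ev1 (fst V $ k, snd V $ k) x + d $ k * f x" for x k
    by (simp add: ev2_component)
  have "V = p1v_mult (- piCR a b c f) d
    \<longleftrightarrow> (\<forall>k\<in>{1, 2}. (fst V $ k, snd V $ k) = - d $ k *\<^sub>R piCR a b c f)"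
    by (simp add: p1v_eq_iff_components p1v_mult_component forall_2)
  also have "\<dots> \<longleftrightarrow> (\<forall>k\<in>{1, 2}. \<forall>(e1, e2)\<in>{(b, c), (c, a), (a, b)}.
      edge_avg (\<lambda>x. (ev2 V x + f x *\<^sub>R d) $ k) e1 e2 = 0)"
    by (simp only: component edge_dofs_zero_iff[OF assms])
  finally show ?thesis
    by auto
qed

lemma p1v_vanishing_on_segment:
  assumes "p \<noteq> q" "n \<bullet> (q - p) = 0" "norm n = 1"
    and vanish: "\<forall>x\<in>open_segment p q. ev2 V x = 0"
  shows "V = p1v_mult (normal_coord p n) (snd V *v n)"
proof -
  define t where "t = rot_m90 n"
  have on_segment: "ev2 V p + s *\<^sub>R (snd V *v (q - p)) = 0" if "0 < s" "s < 1" for s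
  proof -
    have "p + s *\<^sub>R (q - p) \<in> open_segment p q"
      using assms(1) that by (auto simp: in_segment(2) algebra_simps)
    then show ?thesis
      using vanish ev2_affine[of V "p + s *\<^sub>R (q - p)" p] by (simp add: matrix_vector_mult_scaleR)
  qed
  have "ev2 V p + (1/2) *\<^sub>R (snd V *v (q - p)) = 0" "ev2 V p + (1/4) *\<^sub>R (snd V *v (q - p)) = 0"
    by (rule on_segment; simp)+
  then have "snd V *v (q - p) = 0"
    by (simp add: vec_eq_iff forall_2)
  moreover have "q - p = (t \<bullet> (q - p)) *\<^sub>R t"
    unfolding t_def by (rule orthogonal_unit_2D[OF assms(3,2)])
  moreover have "t \<bullet> (q - p) \<noteq> 0"
    using calculation(2) assms(1) by (metis eq_iff_diff_eq_0 scaleR_zero_left)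
  ultimately have "snd V *v t = 0"
    by (metis matrix_vector_mult_scaleR scaleR_eq_0_iff)
  have "ev2 V p = 0"
    using on_segment[of "1/2"] \<open>snd V *v (q - p) = 0\<close> by simp
  have "ev2 V x = (n \<bullet> (x - p)) *\<^sub>R (snd V *v n)" for x
  proof -
    have "ev2 V x = snd V *v ((n \<bullet> (x - p)) *\<^sub>R n + (t \<bullet> (x - p)) *\<^sub>R t)"
      using ev2_affine[of V x p] \<open>ev2 V p = 0\<close> unit_frame_expansion[OF assms(3), of "x - p"]
      by (simp add: t_def)
    also have "\<dots> = (n \<bullet> (x - p)) *\<^sub>R (snd V *v n)"
      using \<open>snd V *v t = 0\<close> by (simp add: matrix_vector_right_distrib matrix_vector_mult_scaleR)
    finally show ?thesis .
  qed
  then show ?thesis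
    by (simp flip: ev2_eq_iff add: fun_eq_iff)
qed

lemma interface_jump_iff:
  assumes "p \<noteq> q" "n \<bullet> (q - p) = 0" "norm n = 1"
  shows "(\<forall>x\<in>open_segment p q. ev2 V x = 0) \<and> divg (snd V) = 0 \<and> sigmag 1 (snd V) Q *v n = g
     \<longleftrightarrow> V = p1v_mult (normal_coord p n) (g - (g \<bullet> n) *\<^sub>R n) \<and> Q = - (g \<bullet> n)"
    (is "?jumps \<longleftrightarrow> V = p1v_mult ?N ?d \<and> _")
proof
  have "n \<bullet> n = 1"
    using assms(3) by (simp add: norm_eq_1)
  assume ?jumps
  then obtain d where V: "V = p1v_mult ?N d"
    using p1v_vanishing_on_segment[OF assms] by blast
  with \<open>?jumps\<close> have "d \<bullet> n = 0"
    by (simp add: divg_p1v_mult inner_commute)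
  with V \<open>?jumps\<close> \<open>n \<bullet> n = 1\<close> have "d - Q *\<^sub>R n = g"
    by (simp add: sigmag_p1v_mult inner_commute)
  have "g \<bullet> n = - Q"
    using \<open>d \<bullet> n = 0\<close> \<open>n \<bullet> n = 1\<close> by (simp flip: \<open>d - Q *\<^sub>R n = g\<close> add: inner_diff_left)
  then have "Q = - (g \<bullet> n)" and "d = ?d"
    using \<open>d - Q *\<^sub>R n = g\<close> by (auto simp: algebra_simps)
  then show "V = p1v_mult ?N ?d \<and> Q = - (g \<bullet> n)"
    using V by simp
next
  assume sol: "V = p1v_mult ?N ?d \<and> Q = - (g \<bullet> n)"
  have "n \<bullet> n = 1"
    using assms(3) by (simp add: norm_eq_1)
  have "n \<bullet> (x - p) = 0" if x: "x \<in> open_segment p q" for x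
  proof -
    obtain u where "x = (1 - u) *\<^sub>R p + u *\<^sub>R q"
      using x by (auto simp: in_segment(2))
    then have "x - p = u *\<^sub>R (q - p)"
      by (simp add: algebra_simps)
    then show ?thesis
      using assms(2) by simp
  qed
  moreover have "?d \<bullet> n = 0"
    using \<open>n \<bullet> n = 1\<close> by (simp add: inner_diff_left)
  ultimately show ?jumps
    using sol \<open>n \<bullet> n = 1\<close> by (simp add: divg_p1v_mult sigmag_p1v_mult inner_commute)
qed

lemma tri_nonempty:
  fixes a b c :: "real^2"
  assumes "\<not> collinear {a, b, c}"
  shows "tri a b c \<noteq> {}"
proof -
  have "a \<noteq> b" "a \<noteq> c" "b \<noteq> c"
    using assms by (auto simp: insert_commute)
  then have "card {a, b, c} = Suc DIM(real^2)"
    by simp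
  then show ?thesis
    using assms by (simp add: tri_def interior_convex_hull_eq_empty collinear_3_eq_affine_dependent)
qed

lemma bounded_tri: "bounded (tri a b c)"
  unfolding tri_def
  by (rule bounded_subset[OF _ interior_subset]) (simp add: finite_imp_bounded_convex_hull)

lemma tri_lmeasurable: "tri a b c \<in> lmeasurable"
  by (rule lmeasurable_open[OF bounded_tri]) (simp add: tri_def)

lemma tri_measure_pos:
  assumes "\<not> collinear {a, b, c}"
  shows "0 < measure lebesgue (tri a b c)"
proof -
  have "\<not> negligible (tri a b c)"
    using tri_nonempty[OF assms] open_not_negligible by (auto simp: tri_def)
  then have "measure lebesgue (tri a b c) \<noteq> 0"
    by (simp add: negligible_iff_measure0[OF tri_lmeasurable])
  then show ?thesis
    using measure_nonneg[of lebesgue "tri a b c"] by linarith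
qed

lemma pw_integrable_on_tri:
  fixes \<alpha> \<beta> :: real
  shows "(\<lambda>x. pw p n \<alpha> \<beta> x) integrable_on tri a b c"
proof -
  let ?H = "{x. n \<bullet> (x - p) > 0}"
  have "open ?H"
    by (intro open_Collect_less continuous_intros)
  then have "?H \<inter> tri a b c \<in> lmeasurable"
    by (intro lmeasurable_open bounded_Int bounded_tri disjI2) (simp add: tri_def open_Int)
  then have "(\<lambda>x. if x \<in> ?H then \<alpha> - \<beta> else 0) integrable_on tri a b c"
    by (intro integrable_restrict_Int[THEN iffD2] integrable_on_const)
  from integrable_add[OF this integrable_on_const[OF tri_lmeasurable, of \<beta>]]
  show ?thesis
    by (rule integrable_eq) (auto simp: pw_def)
qed

lemma cell_avg_affine:
  assumes "f integrable_on S" "S \<in> lmeasurable" "measure lebesgue S \<noteq> 0"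
  shows "cell_avg S (\<lambda>x. r + c * f x) = r + c * cell_avg S f"
proof -
  have "integral S (\<lambda>x. r) = r * measure lebesgue S"
    using integral_mult_right[of S r "\<lambda>x. 1"] lmeasure_integral[OF assms(2)] by simp
  moreover have "integral S (\<lambda>x. r + c * f x) = integral S (\<lambda>x. r) + integral S (\<lambda>x. c * f x)"
    using assms(1,2) by (intro integral_add integrable_on_const integrable_on_mult_right)
  ultimately show ?thesis
    using assms(3) by (simp add: cell_avg_def field_simps)
qed

lemma pw_linear_jump:
  "pw p n (ev2 V x + (n \<bullet> (x - p)) *\<^sub>R d) (ev2 V x) x = ev2 V x + max 0 (n \<bullet> (x - p)) *\<^sub>R d"
  by (simp add: pw_def)

lemma pw_constant_jump:
  fixes r Q :: real
  shows "pw p n (r - Q) r x = r + Q * pw p n (-1) 0 x"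
  by (simp add: pw_def)

lemma jump_cond_iff:
  fixes a b c p q n g :: "real^2"
  assumes nc: "\<not> collinear {a, b, c}" and line: "p \<noteq> q" "n \<bullet> (q - p) = 0" "norm n = 1"
  defines "d \<equiv> g - (g \<bullet> n) *\<^sub>R n"
    and "CR \<equiv> piCR a b c (\<lambda>x. max 0 (n \<bullet> (x - p)))"
    and "A \<equiv> cell_avg (tri a b c) (\<lambda>x. pw p n (-1) 0 x)"
  shows "jump_cond a b c p q n g S \<longleftrightarrow>
    S = (p1v_mult (normal_coord p n - CR) d, p1v_mult (- CR) d, - (g \<bullet> n) * (1 + A), - (g \<bullet> n) * A)"
proof -
  obtain Vp Vm qp qm where S: "S = (Vp, Vm, qp, qm)"
    by (cases S) auto
  let ?N = "normal_coord p n"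
  have ramp: "continuous_on UNIV (\<lambda>x. max 0 (n \<bullet> (x - p)))"
    by (intro continuous_intros)
  have "measure lebesgue (tri a b c) \<noteq> 0"
    using tri_measure_pos[OF nc] by simp
  note pressure_avg = cell_avg_affine[OF pw_integrable_on_tri tri_lmeasurable this]
  have "jump_cond a b c p q n g S \<longleftrightarrow>
      dofs_zero a b c (\<lambda>x. pw p n (ev2 Vp x) (ev2 Vm x) x) (\<lambda>x. pw p n qp qm x)
      \<and> Vp - Vm = p1v_mult ?N d \<and> qp - qm = - (g \<bullet> n)"
    using interface_jump_iff[OF line, of "Vp - Vm" "qp - qm" g]
    by (simp add: jump_cond_def S d_def divg_diff sigmag_diff matrix_vector_mult_diff_rdistrib)
  also have "\<dots> \<longleftrightarrow>
      dofs_zero a b c (\<lambda>x. ev2 Vm x + max 0 (n \<bullet> (x - p)) *\<^sub>R d) (\<lambda>x. qm + (g \<bullet> n) * pw p n (-1) 0 x)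
      \<and> Vp = Vm + p1v_mult ?N d \<and> qp = qm - g \<bullet> n"
  proof -
    have "Vp - Vm = p1v_mult ?N d \<longleftrightarrow> Vp = Vm + p1v_mult ?N d" "qp - qm = - (g \<bullet> n) \<longleftrightarrow> qp = qm - g \<bullet> n"
      by (auto simp: algebra_simps)
    then show ?thesis
      by (auto simp: pw_linear_jump pw_constant_jump)
  qed
  also have "\<dots> \<longleftrightarrow> Vm = p1v_mult (- CR) d \<and> qm = - (g \<bullet> n) * A
      \<and> Vp = Vm + p1v_mult ?N d \<and> qp = qm - g \<bullet> n"
    unfolding dofs_zero_def velocity_dofs_zero_iff[OF nc ramp] pressure_avg
    by (auto simp: CR_def A_def algebra_simps)
  also have "\<dots> \<longleftrightarrow> S = (p1v_mult (?N - CR) d, p1v_mult (- CR) d, - (g \<bullet> n) * (1 + A), - (g \<bullet> n) * A)"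
    by (auto simp: S p1v_mult_add algebra_simps)
  finally show ?thesis .
qed

lemma infdist_hyperplane:
  fixes n p x :: "'a::real_inner"
  assumes "norm n = 1"
  shows "infdist x {y. n \<bullet> (y - p) = 0} = \<bar>n \<bullet> (x - p)\<bar>"
proof -
  let ?H = "{y. n \<bullet> (y - p) = 0}"
  define y0 where "y0 = x - (n \<bullet> (x - p)) *\<^sub>R n"
  have "n \<bullet> n = 1"
    using assms by (simp add: norm_eq_1)
  then have "y0 \<in> ?H"
    by (simp add: y0_def inner_diff_right algebra_simps)
  have "\<bar>n \<bullet> (x - p)\<bar> \<le> dist x y" if "y \<in> ?H" for y
  proof -
    have "n \<bullet> (x - p) = n \<bullet> (x - y)"
      using that by (simp add: inner_diff_right)
    also have "\<bar>\<dots>\<bar> \<le> norm n * norm (x - y)"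
      by (rule Cauchy_Schwarz_ineq2)
    finally show ?thesis
      using assms by (simp add: dist_norm)
  qed
  moreover have "?H \<noteq> {}"
    using \<open>y0 \<in> ?H\<close> by blast
  ultimately have "\<bar>n \<bullet> (x - p)\<bar> \<le> infdist x ?H"
    unfolding infdist_notempty[OF \<open>?H \<noteq> {}\<close>] by (intro cINF_greatest) auto
  moreover have "infdist x ?H \<le> \<bar>n \<bullet> (x - p)\<bar>"
    using infdist_le[OF \<open>y0 \<in> ?H\<close>, of x] assms by (simp add: y0_def dist_norm)
  ultimately show ?thesis
    by linarith
qed

lemma affine_hull_2_eq_hyperplane:
  fixes p q n :: "real^2"
  assumes "p \<noteq> q" "n \<bullet> (q - p) = 0" "norm n = 1"
  shows "affine hull {p, q} = {y. n \<bullet> (y - p) = 0}"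
proof (intro equalityI subsetI)
  fix y
  assume "y \<in> affine hull {p, q}"
  then obtain u v where "y = u *\<^sub>R p + v *\<^sub>R q" "u + v = 1"
    unfolding affine_hull_2 by blast
  then have "y - p = v *\<^sub>R (q - p)"
    by (simp add: algebra_simps flip: scaleR_add_left)
  then show "y \<in> {y. n \<bullet> (y - p) = 0}"
    using assms(2) by simp
next
  fix y
  assume "y \<in> {y. n \<bullet> (y - p) = 0}"
  define t where "t = rot_m90 n"
  define e c where "e = t \<bullet> (y - p)" and "c = t \<bullet> (q - p)"
  have "y - p = e *\<^sub>R t"
    unfolding e_def t_def by (rule orthogonal_unit_2D[OF assms(3)]) (use \<open>y \<in> _\<close> in simp)
  have "q - p = c *\<^sub>R t"
    unfolding c_def t_def by (rule orthogonal_unit_2D[OF assms(3,2)])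
  moreover note \<open>y - p = e *\<^sub>R t\<close>
  moreover have "c \<noteq> 0"
    using \<open>q - p = c *\<^sub>R t\<close> assms(1) by auto
  ultimately have "y - p = (e / c) *\<^sub>R (q - p)"
    by simp
  then have "y = p + (e / c) *\<^sub>R (q - p)"
    by (metis add.commute diff_add_cancel)
  then have "y = (1 - e / c) *\<^sub>R p + (e / c) *\<^sub>R q"
    by (simp add: algebra_simps)
  then show "y \<in> affine hull {p, q}"
    unfolding affine_hull_2 by (intro CollectI exI[of _ "1 - e / c"] exI[of _ "e / c"]) simp
qed

theorem lemma4p2:
  fixes a b c p q n :: "real^2"
  assumes tri: "\<not> collinear {a, b, c}"
    and endpts: "p \<in> frontier (tri a b c)" "q \<in> frontier (tri a b c)" "p \<noteq> q"
    and inside: "open_segment p q \<subseteq> tri a b c"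
    and parts: "tplus a b c p n \<noteq> {}" "tminus a b c p n \<noteq> {}"
    and normal: "norm n = 1" "n \<bullet> (q - p) = 0"
  shows
   "let T = tri a b c; Tp = tplus a b c p n; Tm = tminus a b c p n;
        t = rot_m90 n;
        z = (\<lambda>x. pw p n (-1) 0 x);
        w = (\<lambda>x. pw p n (infdist x (affine hull (open_segment p q))) 0 x);
        pw_w = piCR a b c w
    in (\<exists>!S. jump_cond a b c p q n n S)
     \<and> (\<forall>Vp Vm qp qm. jump_cond a b c p q n n (Vp, Vm, qp, qm) \<longrightarrow>
          (\<forall>x\<in>Tp. ev2 Vp x = 0 \<and> qp = z x - cell_avg T z)
        \<and> (\<forall>x\<in>Tm. ev2 Vm x = 0 \<and> qm = z x - cell_avg T z))
     \<and> (\<exists>!S. jump_cond a b c p q n t S)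
     \<and> (\<forall>Vp Vm qp qm. jump_cond a b c p q n t (Vp, Vm, qp, qm) \<longrightarrow>
          (\<forall>x\<in>Tp. ev2 Vp x = (w x - ev1 pw_w x) *\<^sub>R t \<and> qp = 0)
        \<and> (\<forall>x\<in>Tm. ev2 Vm x = (w x - ev1 pw_w x) *\<^sub>R t \<and> qm = 0))"
proof -
  have "n \<bullet> n = 1" "rot_m90 n \<bullet> n = 0"
    using normal(1) by (simp_all add: norm_eq_1 inner_rot_m90)
  have "affine hull (open_segment p q) = {y. n \<bullet> (y - p) = 0}"
    using affine_hull_2_eq_hyperplane[OF endpts(3) normal(2,1)] endpts(3) by simp
  then have w: "(\<lambda>x. pw p n (infdist x (affine hull (open_segment p q))) 0 x)
      = (\<lambda>x. max 0 (n \<bullet> (x - p)))"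
    by (auto simp: infdist_hyperplane[OF normal(1)] pw_def fun_eq_iff)
  \<comment> \<open>For g = n the direction d = g - (g \<bullet> n) n vanishes; for g = t it is t and
    the pressure jump -(g \<bullet> n) is zero.\<close>
  show ?thesis
    unfolding Let_def w jump_cond_iff[OF tri endpts(3) normal(2,1)]
    using \<open>n \<bullet> n = 1\<close> \<open>rot_m90 n \<bullet> n = 0\<close>
    by (auto simp: tplus_def tminus_def pw_def algebra_simps)
qed

end
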